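(* Let $X$ be the vertex set of a dual polar graph of diameter $d$ with distance $\partial$ and base vertex $u_0\in X$. Let $x,y\in X$, $U=x\cap y$, $\ell=\dim(u_0\cap U)$, and $X'=\{z\in X: U\subseteq z\}$. If $z\in X'$ satisfies $f_x(z)=f_y(z)=1$, then $\partial(u_0,z)=d-\ell$.
   Context: Let $V$ be a finite-dimensional vector space over a finite field with a non-degenerate alternating, Hermitian, or quadratic form of Witt index $d$; $X$ is the set of maximal totally isotropic subspaces (dimension $d$), adjacent iff their intersection has dimension $d-1$, with distance $\partial(x,y)=d-\dim(x\cap y)$. For $z\in X$, $f_z:X\to\mathbb{R}$ is defined by $f_z(w)=1$ if $\partial(u_0,z)+\partial(z,w)=\partial(u_0,w)$ and $f_z(w)=0$ otherwise. *)

theory Defs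
  imports "HOL-Analysis.Analysis"
begin

datatype ('f, 'v) polar_form =
    Alternating "'v \<Rightarrow> 'v \<Rightarrow> 'f"
  | Hermitian "'f \<Rightarrow> 'f" "'v \<Rightarrow> 'v \<Rightarrow> 'f"   \<comment> \<open>field automorphism sigma, form B\<close>
  | Quadratic "'v \<Rightarrow> 'f"

definition nondeg :: "('f::field^'n \<Rightarrow> 'f^'n \<Rightarrow> 'f) \<Rightarrow> bool" where
  "nondeg B \<longleftrightarrow> (\<forall>u. (\<forall>v. B u v = 0) \<longrightarrow> u = 0)"

definition left_linear :: "('f::field^'n \<Rightarrow> 'f^'n \<Rightarrow> 'f) \<Rightarrow> bool" where
  "left_linear B \<longleftrightarrow> (\<forall>u w v. B (u + w) v = B u v + B w v) \<and> (\<forall>c u v. B (c *s u) v = c * B u v)"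

definition bilinear_form :: "('f::field^'n \<Rightarrow> 'f^'n \<Rightarrow> 'f) \<Rightarrow> bool" where
  "bilinear_form B \<longleftrightarrow> left_linear B \<and> left_linear (\<lambda>u v. B v u)"

definition alternating_form :: "('f::field^'n \<Rightarrow> 'f^'n \<Rightarrow> 'f) \<Rightarrow> bool" where
  "alternating_form B \<longleftrightarrow> bilinear_form B \<and> (\<forall>v. B v v = 0) \<and> nondeg B"

definition involutive_automorphism :: "('f::field \<Rightarrow> 'f) \<Rightarrow> bool" where
  "involutive_automorphism \<sigma> \<longleftrightarrow> (\<forall>a b. \<sigma> (a + b) = \<sigma> a + \<sigma> b) \<and> (\<forall>a b. \<sigma> (a * b) = \<sigma> a * \<sigma> b)
     \<and> (\<forall>a. \<sigma> (\<sigma> a) = a) \<and> (\<exists>a. \<sigma> a \<noteq> a)"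

definition hermitian_form :: "('f::field \<Rightarrow> 'f) \<Rightarrow> ('f^'n \<Rightarrow> 'f^'n \<Rightarrow> 'f) \<Rightarrow> bool" where
  "hermitian_form \<sigma> B \<longleftrightarrow> involutive_automorphism \<sigma> \<and> left_linear B
     \<and> (\<forall>u v. B u v = \<sigma> (B v u)) \<and> nondeg B"

definition polarization :: "('f::field^'n \<Rightarrow> 'f) \<Rightarrow> 'f^'n \<Rightarrow> 'f^'n \<Rightarrow> 'f" where
  "polarization Q u v = Q (u + v) - Q u - Q v"

text \<open>Non-degenerate quadratic form: the singular radical is trivial (valid in every characteristic).\<close>
definition quadratic_form :: "('f::field^'n \<Rightarrow> 'f) \<Rightarrow> bool" where
  "quadratic_form Q \<longleftrightarrow> (\<forall>c v. Q (c *s v) = c^2 * Q v) \<and> bilinear_form (polarization Q)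
     \<and> (\<forall>u. Q u = 0 \<and> (\<forall>v. polarization Q u v = 0) \<longrightarrow> u = 0)"

fun valid_form :: "('f::field, 'f^'n) polar_form \<Rightarrow> bool" where
  "valid_form (Alternating B) = alternating_form B"
| "valid_form (Hermitian \<sigma> B) = hermitian_form \<sigma> B"
| "valid_form (Quadratic Q) = quadratic_form Q"

fun totally_isotropic :: "('f::field, 'f^'n) polar_form \<Rightarrow> ('f^'n) set \<Rightarrow> bool" where
  "totally_isotropic (Alternating B) W = (\<forall>u\<in>W. \<forall>v\<in>W. B u v = 0)"
| "totally_isotropic (Hermitian \<sigma> B) W = (\<forall>u\<in>W. \<forall>v\<in>W. B u v = 0)"
| "totally_isotropic (Quadratic Q) W = (\<forall>w\<in>W. Q w = 0)"

definition witt_index :: "('f::field, 'f^'n) polar_form \<Rightarrow> nat" where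
  "witt_index F = Max {vec.dim W | W. vec.subspace W \<and> totally_isotropic F W}"

definition dp_vertices :: "('f::field, 'f^'n) polar_form \<Rightarrow> ('f^'n) set set" where
  "dp_vertices F = {W. vec.subspace W \<and> totally_isotropic F W \<and> vec.dim W = witt_index F}"

definition dp_dist :: "('f::field, 'f^'n) polar_form \<Rightarrow> ('f^'n) set \<Rightarrow> ('f^'n) set \<Rightarrow> nat" where
  "dp_dist F x y = witt_index F - vec.dim (x \<inter> y)"

definition geod_fun :: "('f::field, 'f^'n) polar_form \<Rightarrow> ('f^'n) set \<Rightarrow> ('f^'n) set \<Rightarrow> ('f^'n) set \<Rightarrow> real" where
  "geod_fun F u0 z w = (if dp_dist F u0 z + dp_dist F z w = dp_dist F u0 w then 1 else 0)"

end

theory Submission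
  imports Defs
begin

text \<open>If \<open>x\<close> lies on a geodesic from \<open>u0\<close> to \<open>z\<close>, then dimension counting (Grassmann's formula
  applied to \<open>u0 \<inter> x\<close> and \<open>x \<inter> z\<close>, whose sum lies in \<open>x\<close>) forces \<open>u0 \<inter> z \<subseteq> x\<close>. Doing this for
  both \<open>x\<close> and \<open>y\<close> gives \<open>u0 \<inter> z \<subseteq> x \<inter> y\<close>, and with \<open>x \<inter> y \<subseteq> z\<close> this means
  \<open>u0 \<inter> z = u0 \<inter> (x \<inter> y)\<close>.\<close>

lemma inter_subset_of_dim_inter_add_eq:
  fixes u x z :: "('f::field^'n) set"
  assumes su: "vec.subspace u" and sx: "vec.subspace x" and sz: "vec.subspace z"
    and eq: "vec.dim (u \<inter> x) + vec.dim (x \<inter> z) = vec.dim x + vec.dim (u \<inter> z)"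
  shows "u \<inter> z \<subseteq> x"
proof -
  let ?A = "u \<inter> x" and ?B = "x \<inter> z"
  have sA: "vec.subspace ?A" and sB: "vec.subspace ?B"
    using su sx sz by (auto intro: vec.subspace_inter)
  have "{a + b |a b. a \<in> ?A \<and> b \<in> ?B} \<subseteq> x"
    using sx by (auto intro: vec.subspace_add)
  hence "vec.dim {a + b |a b. a \<in> ?A \<and> b \<in> ?B} \<le> vec.dim x"
    by (rule vec.dim_subset)
  hence "vec.dim (u \<inter> z) \<le> vec.dim (?A \<inter> ?B)"
    using vec.dim_sums_Int[OF sA sB] eq by linarith
  moreover have "?A \<inter> ?B \<subseteq> u \<inter> z" by blast
  moreover have "vec.subspace (?A \<inter> ?B)" "vec.subspace (u \<inter> z)"
    using sA sB su sz by (auto intro: vec.subspace_inter)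
  ultimately have "?A \<inter> ?B = u \<inter> z" using vec.subspace_dim_equal by blast
  thus ?thesis by blast
qed

lemma dp_vertexD:
  assumes "x \<in> dp_vertices F"
  shows "vec.subspace x" "vec.dim x = witt_index F"
  using assms by (auto simp: dp_vertices_def)

lemma dp_dist_geodesic_inter_subset:
  assumes u: "u \<in> dp_vertices F" and x: "x \<in> dp_vertices F" and z: "z \<in> dp_vertices F"
    and geodesic: "dp_dist F u x + dp_dist F x z = dp_dist F u z"
  shows "u \<inter> z \<subseteq> x"
proof (rule inter_subset_of_dim_inter_add_eq)
  show "vec.subspace u" "vec.subspace x" "vec.subspace z"
    using u x z by (auto dest: dp_vertexD)
  have "vec.dim (u \<inter> x) \<le> vec.dim x" "vec.dim (x \<inter> z) \<le> vec.dim x"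
    "vec.dim (u \<inter> z) \<le> vec.dim z"
    by (auto intro: vec.dim_subset)
  then show "vec.dim (u \<inter> x) + vec.dim (x \<inter> z) = vec.dim x + vec.dim (u \<inter> z)"
    using geodesic dp_vertexD(2)[OF x] dp_vertexD(2)[OF z] by (simp add: dp_dist_def)
qed

theorem lemmaA3:
  fixes F :: "('f::{field,finite}, 'f^'n) polar_form"
    and u0 x y z :: "('f^'n) set"
  assumes "valid_form F"
    and "u0 \<in> dp_vertices F" and "x \<in> dp_vertices F" and "y \<in> dp_vertices F"
    and "z \<in> dp_vertices F" and "x \<inter> y \<subseteq> z"
    and "geod_fun F u0 x z = 1" and "geod_fun F u0 y z = 1"
  shows "dp_dist F u0 z = witt_index F - vec.dim (u0 \<inter> (x \<inter> y))"
proof -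
  have "dp_dist F u0 x + dp_dist F x z = dp_dist F u0 z"
    and "dp_dist F u0 y + dp_dist F y z = dp_dist F u0 z"
    using assms(7,8) by (simp_all add: geod_fun_def split: if_splits)
  then have "u0 \<inter> z \<subseteq> x" and "u0 \<inter> z \<subseteq> y"
    using assms(2-5) by (simp_all add: dp_dist_geodesic_inter_subset)
  with \<open>x \<inter> y \<subseteq> z\<close> have "u0 \<inter> (x \<inter> y) = u0 \<inter> z" by blast
  thus ?thesis by (simp add: dp_dist_def)
qed

end
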